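(* Let $1\le k\le n-k$, $\mathfrak{g}=\mathfrak{sl}_n(\mathbb{C})$, and let $I=\{i_1<\cdots<i_k\}$ and $J=\{j_1<\cdots<j_k\}$ be distinct subsets of $\{1,\dots,n\}$ with $i_1\le j_1$; let $r=|I\cap J|$. Let $\nu$ be a dominant integral weight such that $\nu+\lambda_I$ and $\nu+\lambda_J$ are dominant integral, and let $s\ge1$. If $f_{\mathfrak{C}_p,I}(\nu)=f_{\mathfrak{C}_p,J}(\nu)$ for $2\le p\le s+1$, then there exist two lists of integers $[x_1,\dots,x_{k-r}]$ and $[y_1,\dots,y_{k-r}]$, not permutations of each other, with $\sum_{i=1}^{k-r}x_i^j=\sum_{i=1}^{k-r}y_i^j$ for $j=1,\dots,s$ (a non-trivial PTE solution of size $k-r$ and degree $s$).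
   Context: $X_{ij}=E_{ij}$ ($i\ne j$), $X_{ii}=E_{ii}-\frac1n\sum_lE_{ll}$; $\mathfrak{C}_p=\sum_{i_1,\dots,i_p=1}^nX_{i_1i_2}\cdots X_{i_pi_1}\in Z(\mathfrak{g})$. $\omega_1,\dots,\omega_{n-1}$ are fundamental weights, $\omega_0=\omega_n=0$. For a $k$-subset $I=\{i_1<\cdots<i_k\}$, $\lambda_I=\sum_{t=1}^k(\omega_{i_t}-\omega_{i_t-1})$ (the weight of $e_{i_1}\wedge\cdots\wedge e_{i_k}$ in $V_{\omega_k}=\wedge^k\mathbb{C}^n$). For a weight $\mu$, $\chi_\mu$ is the infinitesimal central character of the irreducible highest weight module $V_\mu$, and $f_{\mathfrak{C}_p,I}(\nu)=\chi_{\nu+\lambda_I}(\mathfrak{C}_p)-\chi_\nu(\mathfrak{C}_p)-\chi_{\omega_k}(\mathfrak{C}_p)$ (the eigenvalue of $M_{\omega_k,\nu}(\mathfrak{C}_p)$ on the constituent $V_{\nu+\lambda_I}$ of $V_{\omega_k}\otimes V_\nu$). *)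

theory Defs
  imports Complex_Main "HOL-Library.Multiset"
begin

text \<open>Weights of sl_n are encoded by their coordinates w.r.t. the fundamental
weights: a function mu :: nat => int, of which only the values mu 1, ..., mu (n-1) matter.\<close>

definition fund_wt :: "nat \<Rightarrow> nat \<Rightarrow> int" where
  "fund_wt k = (\<lambda>t. if t = k then 1 else 0)"

text \<open>lambda_I = sum over i in I of (omega_i - omega_(i-1)), with omega_0 = omega_n = 0:
the coefficient of omega_t (1 <= t <= n-1) is [t in I] - [t+1 in I].\<close>
definition lamI :: "nat set \<Rightarrow> nat \<Rightarrow> int" where
  "lamI I = (\<lambda>t. (if t \<in> I then 1 else 0) - (if t + 1 \<in> I then 1 else 0))"

definition wt_add :: "(nat \<Rightarrow> int) \<Rightarrow> (nat \<Rightarrow> int) \<Rightarrow> nat \<Rightarrow> int" where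
  "wt_add a b = (\<lambda>t. a t + b t)"

definition dominant :: "nat \<Rightarrow> (nat \<Rightarrow> int) \<Rightarrow> bool" where
  "dominant n mu \<longleftrightarrow> (\<forall>t\<in>{1..n-1}. mu t \<ge> 0)"

text \<open>Value of the weight mu on X_ii = E_ii - (1/n) sum_l E_ll;
omega_t(X_ii) = [i <= t] - t/n.\<close>
definition hval :: "nat \<Rightarrow> (nat \<Rightarrow> int) \<Rightarrow> nat \<Rightarrow> complex" where
  "hval n mu i = (\<Sum>t=1..n-1. of_int (mu t) *
       ((if i \<le> t then 1 else 0) - of_nat t / of_nat n))"

text \<open>A letter (a,b) stands for X_ab.  hw_coef n mu w is the coefficient of the
highest weight vector v in (X_{a1 b1} ... X_{am bm}) v, for v a highest weight vector of
weight mu.  It is computed from the leftmost letter: a diagonal letter acts by mu(X_aa),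
a lowering letter (a > b) contributes nothing to the v-component, and a raising letter
(a < b) is commuted to the right (it kills v) using
[X_ab, X_cd] = delta_bc X_ad - delta_da X_cb (valid also with diagonal X's).\<close>
primrec hw_coef_fuel :: "nat \<Rightarrow> nat \<Rightarrow> (nat \<Rightarrow> int) \<Rightarrow> (nat \<times> nat) list \<Rightarrow> complex" where
  "hw_coef_fuel 0 n mu w = (if w = [] then 1 else 0)"
| "hw_coef_fuel (Suc m) n mu w =
     (case w of [] \<Rightarrow> 1
      | (ab # u) \<Rightarrow>
         (let a = fst ab; b = snd ab in
          if a = b then hval n mu a * hw_coef_fuel m n mu u
          else if b < a then 0
          else (\<Sum>i<length u.
                  (if b = fst (u ! i)
                   then hw_coef_fuel m n mu (take i u @ [(a, snd (u ! i))] @ drop (Suc i) u)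
                   else 0)
                - (if snd (u ! i) = a
                   then hw_coef_fuel m n mu (take i u @ [(fst (u ! i), b)] @ drop (Suc i) u)
                   else 0))))"

definition hw_coef :: "nat \<Rightarrow> (nat \<Rightarrow> int) \<Rightarrow> (nat \<times> nat) list \<Rightarrow> complex" where
  "hw_coef n mu w = hw_coef_fuel (length w) n mu w"

definition cyc_word :: "nat list \<Rightarrow> (nat \<times> nat) list" where
  "cyc_word is = map (\<lambda>t. (is ! t, is ! ((t + 1) mod length is))) [0..<length is]"

text \<open>chi_mu(C_p): the scalar by which C_p acts on the highest weight module V_mu.\<close>
definition chi :: "nat \<Rightarrow> (nat \<Rightarrow> int) \<Rightarrow> nat \<Rightarrow> complex" where
  "chi n mu p = (\<Sum>is\<in>{is. length is = p \<and> set is \<subseteq> {1..n}}. hw_coef n mu (cyc_word is))"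

definition fC :: "nat \<Rightarrow> nat \<Rightarrow> nat \<Rightarrow> nat set \<Rightarrow> (nat \<Rightarrow> int) \<Rightarrow> complex" where
  "fC n k p I nu = chi n (wt_add nu (lamI I)) p - chi n nu p - chi n (fund_wt k) p"

end

theory Submission
  imports Defs "HOL-Computational_Algebra.Formal_Power_Series"
begin

text \<open>\<open>\<CC>\<^sub>p\<close> acts on \<open>V\<^sub>\<mu>\<close> by the highest weight coefficient of \<open>tr X\<^sup>p\<close>, where \<open>X = (X\<^sub>i\<^sub>j)\<close>.
Commuting raising operators to the right turns the diagonal entries of \<open>X\<^sup>q\<close> into a triangular
recursion, whose solution has the generating function
\<open>1 - \<Sum>\<^sub>q tr(X\<^sup>q) t\<^sup>q\<^sup>+\<^sup>1 = \<Prod>\<^sub>a (1 - (l\<^sub>a + 1) t) / (1 - l\<^sub>a t)\<close>, with \<open>l\<^sub>a = (\<mu> + \<rho>)(X\<^sub>a\<^sub>a)\<close> up to a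
constant. By Newton's identities the values \<open>\<chi>\<^sub>\<mu>(\<CC>\<^sub>2), \<dots>, \<chi>\<^sub>\<mu>(\<CC>\<^sub>s\<^sub>+\<^sub>1)\<close> therefore
determine the sums \<open>\<Sum>\<^sub>a (l\<^sub>a + 1)\<^sup>j - l\<^sub>a\<^sup>j\<close> for \<open>j \<le> s + 2\<close>. For \<open>\<mu> = \<nu> + \<lambda>\<^sub>I\<close> one has
\<open>l\<^sub>a = l'\<^sub>a + [a \<in> I]\<close> with \<open>l'\<close> independent of \<open>I\<close>, so equal eigenvalues for \<open>I\<close> and \<open>J\<close>
say that the second differences of \<open>t\<^sup>j\<close> at the \<open>l'\<^sub>a\<close> have equal sums over \<open>I\<close> and over \<open>J\<close>.
Inverting these binomial transforms twice gives equal power sums of degree \<open>\<le> s\<close> of the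
\<open>l'\<^sub>a\<close>, which up to a common shift are the \<open>\<epsilon>\<close>-coordinates of \<open>\<nu> + \<rho>\<close>: distinct integers,
as \<open>\<nu>\<close> is dominant. Discarding \<open>I \<inter> J\<close> leaves the PTE solution.\<close>

section \<open>Casimir eigenvalues as traces of matrix powers\<close>

text \<open>\<open>power_entry n \<phi> c d q\<close> is \<open>\<phi>\<close> applied to the \<open>(c, d)\<close> entry of \<open>X\<^sup>q\<close>, where \<open>X = (X\<^sub>i\<^sub>j)\<close>
is the \<open>n \<times> n\<close> matrix with entries in \<open>U(\<gg>)\<close> and a word of letters \<open>(i, j)\<close> stands for a
monomial in the \<open>X\<^sub>i\<^sub>j\<close>.\<close>

primrec power_entry ::
    "nat \<Rightarrow> ((nat \<times> nat) list \<Rightarrow> 'a::comm_ring_1) \<Rightarrow> nat \<Rightarrow> nat \<Rightarrow> nat \<Rightarrow> 'a" where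
  "power_entry n \<phi> c d 0 = (if c = d then \<phi> [] else 0)"
| "power_entry n \<phi> c d (Suc q) = (\<Sum>j=1..n. power_entry n (\<lambda>w. \<phi> ((c, j) # w)) j d q)"

lemma power_entry_add:
  "power_entry n (\<lambda>w. f w + g w) c d q = power_entry n f c d q + power_entry n g c d q"
  by (induction q arbitrary: f g c) (auto simp: sum.distrib)

lemma power_entry_diff:
  "power_entry n (\<lambda>w. f w - g w) c d q = power_entry n f c d q - power_entry n g c d q"
  by (induction q arbitrary: f g c) (auto simp: sum_subtractf)

lemma power_entry_scale:
  "power_entry n (\<lambda>w. x * f w) c d q = x * power_entry n f c d q"
  by (induction q arbitrary: f c) (auto simp: sum_distrib_left)

lemma power_entry_zero: "power_entry n (\<lambda>w. 0) c d q = 0"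
  by (induction q arbitrary: c) auto

lemma power_entry_if:
  "power_entry n (\<lambda>w. if P then f w else 0) c d q = (if P then power_entry n f c d q else 0)"
  by (cases P) (auto simp: power_entry_zero)

text \<open>\<open>ad_coef a b \<phi> u\<close> is \<open>\<phi>\<close> applied to \<open>[X\<^sub>a\<^sub>b, u]\<close>, expanded by the Leibniz rule and
\<open>[X\<^sub>a\<^sub>b, X\<^sub>c\<^sub>d] = \<delta>\<^sub>b\<^sub>c X\<^sub>a\<^sub>d - \<delta>\<^sub>d\<^sub>a X\<^sub>c\<^sub>b\<close>.\<close>

definition ad_coef ::
    "nat \<Rightarrow> nat \<Rightarrow> ((nat \<times> nat) list \<Rightarrow> 'a::comm_ring_1) \<Rightarrow> (nat \<times> nat) list \<Rightarrow> 'a" where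
  "ad_coef a b \<phi> u = (\<Sum>i<length u.
      (if b = fst (u ! i) then \<phi> (u[i := (a, snd (u ! i))]) else 0)
    - (if snd (u ! i) = a then \<phi> (u[i := (fst (u ! i), b)]) else 0))"

lemma ad_coef_Nil: "ad_coef a b \<phi> [] = 0"
  by (simp add: ad_coef_def)

lemma ad_coef_Cons:
  "ad_coef a b \<phi> (x # u) =
     (if b = fst x then \<phi> ((a, snd x) # u) else 0) - (if snd x = a then \<phi> ((fst x, b) # u) else 0)
     + ad_coef a b (\<lambda>w. \<phi> (x # w)) u"
proof -
  have "(x # u)[Suc i := y] = x # u[i := y]" "(x # u) ! Suc i = u ! i" for i y
    by simp_all
  then show ?thesis
    unfolding ad_coef_def by (simp only: length_Cons sum.lessThan_Suc_shift) simp
qed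

text \<open>The entries of \<open>X\<^sup>q\<close> transform under \<open>ad X\<^sub>a\<^sub>b\<close> like those of \<open>X\<close> itself.\<close>

lemma power_entry_ad_coef:
  assumes "a \<in> {1..n}" "b \<in> {1..n}"
  shows "power_entry n (ad_coef a b \<phi>) c d q =
           (if b = c then power_entry n \<phi> a d q else 0)
         - (if d = a then power_entry n \<phi> c b q else 0)"
proof (induction q arbitrary: \<phi> c)
  case 0
  then show ?case by (auto simp: ad_coef_Nil)
next
  case (Suc q)
  let ?P = "\<lambda>\<psi> c d. power_entry n \<psi> c d q"
  have step: "(\<lambda>w. ad_coef a b \<phi> ((c, j) # w)) = (\<lambda>w.
      (if b = c then \<phi> ((a, j) # w) else 0) - (if j = a then \<phi> ((c, b) # w) else 0)
    + ad_coef a b (\<lambda>w. \<phi> ((c, j) # w)) w)" for j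
    by (rule ext) (simp add: ad_coef_Cons)
  have "power_entry n (ad_coef a b \<phi>) c d (Suc q) = (\<Sum>j=1..n.
      ((if b = c then ?P (\<lambda>w. \<phi> ((a, j) # w)) j d else 0)
      - (if j = a then ?P (\<lambda>w. \<phi> ((c, b) # w)) j d else 0))
    + ((if b = j then ?P (\<lambda>w. \<phi> ((c, j) # w)) a d else 0)
      - (if d = a then ?P (\<lambda>w. \<phi> ((c, j) # w)) j b else 0)))"
    by (simp only: power_entry.simps step power_entry_add power_entry_diff power_entry_if Suc.IH)
  also have "\<dots> = (if b = c then power_entry n \<phi> a d (Suc q) else 0)
      - (if d = a then power_entry n \<phi> c b (Suc q) else 0)"
  proof -
    have "(\<Sum>j=1..n. if j = a then ?P (\<lambda>w. \<phi> ((c, b) # w)) j d else 0)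
        = ?P (\<lambda>w. \<phi> ((c, b) # w)) a d"
      "(\<Sum>j=1..n. if b = j then ?P (\<lambda>w. \<phi> ((c, j) # w)) a d else 0)
        = ?P (\<lambda>w. \<phi> ((c, b) # w)) a d"
      using assms by simp_all
    moreover have "(\<Sum>j=1..n. if b = c then ?P (\<lambda>w. \<phi> ((a, j) # w)) j d else 0)
        = (if b = c then power_entry n \<phi> a d (Suc q) else 0)"
      "(\<Sum>j=1..n. if d = a then ?P (\<lambda>w. \<phi> ((c, j) # w)) j b else 0)
        = (if d = a then power_entry n \<phi> c b (Suc q) else 0)"
      by simp_all
    ultimately show ?thesis
      by (simp only: sum.distrib sum_subtractf) simp
  qed
  finally show ?case .
qed

lemma hw_coef_Nil: "hw_coef n mu [] = 1"
  by (simp add: hw_coef_def)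

lemma hw_coef_Cons:
  "hw_coef n mu ((a, b) # u) =
     (if a = b then hval n mu a * hw_coef n mu u
      else if b < a then 0 else ad_coef a b (hw_coef n mu) u)"
proof -
  have "take i u @ [x] @ drop (Suc i) u = u[i := x]" if "i < length u" for i x
    using that by (simp add: upd_conv_take_nth_drop)
  then show ?thesis
    unfolding hw_coef_def ad_coef_def by (auto simp: Let_def intro!: sum.cong)
qed

fun walk_word :: "nat \<Rightarrow> nat list \<Rightarrow> nat \<Rightarrow> (nat \<times> nat) list" where
  "walk_word c [] d = [(c, d)]"
| "walk_word c (v # vs) d = (c, v) # walk_word v vs d"

lemma sum_lists_length_Suc:
  assumes "finite S"
  shows "(\<Sum>xs\<in>{xs. length xs = Suc q \<and> set xs \<subseteq> S}. f xs)
       = (\<Sum>x\<in>S. \<Sum>xs\<in>{xs. length xs = q \<and> set xs \<subseteq> S}. f (x # xs))"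
proof -
  let ?L = "{xs. length xs = q \<and> set xs \<subseteq> S}"
  have "{xs. length xs = Suc q \<and> set xs \<subseteq> S} = (\<lambda>(x, xs). x # xs) ` (S \<times> ?L)"
    by (auto simp: length_Suc_conv)
  moreover have "inj_on (\<lambda>(x, xs). x # xs) (S \<times> ?L)"
    by (auto simp: inj_on_def)
  ultimately show ?thesis
    by (simp only: sum.reindex sum.cartesian_product) (simp add: case_prod_beta)
qed

lemma power_entry_eq_sum_walks:
  assumes "d \<in> {1..n}"
  shows "power_entry n \<phi> c d (Suc q) =
           (\<Sum>vs\<in>{vs. length vs = q \<and> set vs \<subseteq> {1..n}}. \<phi> (walk_word c vs d))"
proof (induction q arbitrary: \<phi> c)
  case 0
  have "{vs :: nat list. length vs = 0 \<and> set vs \<subseteq> {1..n}} = {[]}"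
    by auto
  then show ?case
    using assms by (simp cong: if_cong)
next
  case (Suc q)
  show ?case
    by (subst power_entry.simps, subst Suc.IH, subst sum_lists_length_Suc) auto
qed

lemma walk_word_conv_map:
  "walk_word c vs d = map (\<lambda>t. ((c # vs) ! t, (vs @ [d]) ! t)) [0..<Suc (length vs)]"
proof (induction vs arbitrary: c)
  case (Cons v vs)
  show ?case
    by (simp only: walk_word.simps Cons.IH length_Cons map_upt_Suc[of _ "Suc (length vs)"])
      (simp del: upt_Suc)
qed simp

lemma cyc_word_Cons: "cyc_word (a # vs) = walk_word a vs a"
  unfolding walk_word_conv_map cyc_word_def
proof (rule map_cong)
  fix t assume "t \<in> set [0..<Suc (length vs)]"
  then consider "t < length vs" | "t = length vs"
    by fastforce
  then show "((a # vs) ! t, (a # vs) ! ((t + 1) mod length (a # vs))) = ((a # vs) ! t, (vs @ [a]) ! t)"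
    by cases (simp_all add: nth_append)
qed simp

lemma chi_eq_trace_power:
  "chi n mu (Suc q) = (\<Sum>a=1..n. power_entry n (hw_coef n mu) a a (Suc q))"
proof -
  have "chi n mu (Suc q) = (\<Sum>a=1..n. \<Sum>vs\<in>{vs. length vs = q \<and> set vs \<subseteq> {1..n}}.
                             hw_coef n mu (cyc_word (a # vs)))"
    unfolding chi_def by (rule sum_lists_length_Suc) simp
  also have "\<dots> = (\<Sum>a=1..n. power_entry n (hw_coef n mu) a a (Suc q))"
    by (rule sum.cong) (simp_all only: power_entry_eq_sum_walks cyc_word_Cons)
  finally show ?thesis .
qed

text \<open>\<open>(\<mu> + \<rho>)(X\<^sub>a\<^sub>a)\<close> up to the additive constant \<open>(n - 1)/2\<close>, as \<open>\<rho>(X\<^sub>a\<^sub>a) = (n + 1)/2 - a\<close>.\<close>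

definition rho_hval :: "nat \<Rightarrow> (nat \<Rightarrow> int) \<Rightarrow> nat \<Rightarrow> complex" where
  "rho_hval n mu a = hval n mu a + of_nat (n - a)"

lemma power_entry_diag_Suc:
  assumes a: "a \<in> {1..n}"
  shows "power_entry n (hw_coef n mu) a a (Suc q) =
           rho_hval n mu a * power_entry n (hw_coef n mu) a a q
         - (\<Sum>j\<in>{a<..n}. power_entry n (hw_coef n mu) j j q)"
proof -
  let ?m = "\<lambda>j. power_entry n (hw_coef n mu) j j q"
  have first_letter: "power_entry n (\<lambda>w. hw_coef n mu ((a, j) # w)) j a q =
     (if j = a then hval n mu a * ?m a else 0) + (if a < j then ?m a - ?m j else 0)"
    if "j \<in> {1..n}" for j
  proof -
    consider "j = a" | "j < a" | "a < j"
      by linarith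
    then show ?thesis
    proof cases
      case 3
      then have "(\<lambda>w. hw_coef n mu ((a, j) # w)) = ad_coef a j (hw_coef n mu)"
        by (auto simp: hw_coef_Cons)
      then show ?thesis
        using 3 a that by (simp add: power_entry_ad_coef)
    qed (simp_all add: hw_coef_Cons power_entry_scale power_entry_zero)
  qed
  have "(\<Sum>j=1..n. if a < j then ?m a - ?m j else 0) = (\<Sum>j\<in>{1..n} \<inter> {j. a < j}. ?m a - ?m j)"
    by (simp add: sum.inter_restrict)
  also have "{1..n} \<inter> {j. a < j} = {a<..n}"
    using a by auto
  finally have "power_entry n (hw_coef n mu) a a (Suc q) =
      hval n mu a * ?m a + (\<Sum>j\<in>{a<..n}. ?m a - ?m j)"
    using a by (simp add: first_letter sum.distrib)
  also have "\<dots> = rho_hval n mu a * ?m a - (\<Sum>j\<in>{a<..n}. ?m j)"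
    by (simp add: sum_subtractf rho_hval_def algebra_simps)
  finally show ?thesis .
qed

fun moment_step :: "'a::comm_ring_1 \<Rightarrow> (nat \<Rightarrow> 'a) \<Rightarrow> nat \<Rightarrow> 'a" where
  "moment_step g C 0 = 1"
| "moment_step g C (Suc q) = g * moment_step g C q - C q"

primrec moments :: "'a::comm_ring_1 list \<Rightarrow> nat \<Rightarrow> 'a" where
  "moments [] = (\<lambda>q. 0)"
| "moments (g # gs) = (\<lambda>q. moments gs q + moment_step g (moments gs) q)"

lemma moments_0: "moments gs 0 = of_nat (length gs)"
  by (induction gs) auto

lemma moments_1: "moments gs 1 = sum_list gs - of_nat (length gs choose 2)"
  by (induction gs) (auto simp: moments_0 numeral_2_eq_2 algebra_simps)

lemma sum_diag_power_entries_eq_moments: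
  assumes "1 \<le> a" "a \<le> n + 1"
  shows "(\<Sum>b=a..n. power_entry n (hw_coef n mu) b b q) = moments (map (rho_hval n mu) [a..<n+1]) q"
  using assms
proof (induction "n + 1 - a" arbitrary: a q)
  case 0
  then show ?case by simp
next
  case (Suc d)
  have a: "a \<in> {1..n}"
    using Suc by simp
  let ?tail = "moments (map (rho_hval n mu) [a+1..<n+1])"
  have tail: "(\<Sum>b=a+1..n. power_entry n (hw_coef n mu) b b q) = ?tail q" for q
    using Suc by simp
  have head: "power_entry n (hw_coef n mu) a a q = moment_step (rho_hval n mu a) ?tail q" for q
  proof (induction q)
    case (Suc q)
    have "{a<..n} = {a+1..n}"
      by auto
    then show ?case
      using power_entry_diag_Suc[OF a, of mu q] by (simp only: Suc tail moment_step.simps)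
  qed (simp add: hw_coef_Nil)
  have "{a..n} = insert a {a+1..n}"
    using a by auto
  then have "(\<Sum>b=a..n. power_entry n (hw_coef n mu) b b q) =
      power_entry n (hw_coef n mu) a a q + (\<Sum>b=a+1..n. power_entry n (hw_coef n mu) b b q)"
    by simp
  also have "\<dots> = moments (map (rho_hval n mu) [a..<n+1]) q"
  proof -
    have "[a..<n+1] = a # [a+1..<n+1]"
      using a by (simp add: upt_conv_Cons del: upt_Suc)
    then show ?thesis
      by (simp only: tail head list.map moments.simps) (rule add.commute)
  qed
  finally show ?case .
qed

lemma chi_eq_moments: "chi n mu (Suc q) = moments (map (rho_hval n mu) [1..<n+1]) (Suc q)"
  using chi_eq_trace_power sum_diag_power_entries_eq_moments[of 1 n mu "Suc q"] by simp

section \<open>The generating function of the moments\<close>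

definition moments_fps :: "'a::comm_ring_1 list \<Rightarrow> 'a fps" where
  "moments_fps gs = Abs_fps (\<lambda>k. if k = 0 then 0 else moments gs (k - 1))"

definition moment_step_fps :: "'a::comm_ring_1 \<Rightarrow> 'a list \<Rightarrow> 'a fps" where
  "moment_step_fps g gs = Abs_fps (\<lambda>k. if k = 0 then 0 else moment_step g (moments gs) (k - 1))"

definition lin_prod :: "'a::comm_ring_1 list \<Rightarrow> 'a fps" where
  "lin_prod gs = prod_list (map (\<lambda>g. 1 - fps_const g * fps_X) gs)"

text \<open>The logarithmic derivative \<open>-g / (1 - g X)\<close> of \<open>1 - g X\<close>.\<close>

definition lin_log_deriv :: "'a::comm_ring_1 \<Rightarrow> 'a fps" where
  "lin_log_deriv g = Abs_fps (\<lambda>m. - (g ^ (m + 1)))"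

definition lin_prod_log_deriv :: "'a::comm_ring_1 list \<Rightarrow> 'a fps" where
  "lin_prod_log_deriv gs = sum_list (map lin_log_deriv gs)"

definition fwd_diff_pow :: "nat \<Rightarrow> 'a::comm_ring_1 \<Rightarrow> 'a" where
  "fwd_diff_pow j x = (x + 1) ^ j - x ^ j"

lemma moments_fps_nth: "fps_nth (moments_fps gs) i = (if i = 0 then 0 else moments gs (i - 1))"
  by (simp add: moments_fps_def)

lemma moments_fps_Cons: "moments_fps (g # gs) = moments_fps gs + moment_step_fps g gs"
  by (rule fps_ext) (simp add: moments_fps_def moment_step_fps_def)

lemma moment_step_fps_mult:
  "moment_step_fps g gs * (1 - fps_const g * fps_X) = fps_X * (1 - moments_fps gs)"
proof -
  have "moment_step_fps g gs - fps_const g * (fps_X * moment_step_fps g gs) = fps_X * (1 - moments_fps gs)"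
  proof (rule fps_ext)
    fix k
    show "fps_nth (moment_step_fps g gs - fps_const g * (fps_X * moment_step_fps g gs)) k =
          fps_nth (fps_X * (1 - moments_fps gs)) k"
    proof (cases k)
      case (Suc k')
      then show ?thesis
        by (cases k') (auto simp: moment_step_fps_def moments_fps_def)
    qed (simp add: moment_step_fps_def)
  qed
  then show ?thesis
    by (simp add: algebra_simps)
qed

lemma lin_prod_Cons: "lin_prod (g # gs) = (1 - fps_const g * fps_X) * lin_prod gs"
  by (simp add: lin_prod_def)

text \<open>The Perelomov--Popov formula for the generating function of the Casimir eigenvalues.\<close>

lemma one_minus_moments_fps_mult_lin_prod:
  "(1 - moments_fps gs) * lin_prod gs = lin_prod (map (\<lambda>g. g + 1) gs)"
proof (induction gs)
  case Nil
  then show ?case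
    by (simp add: moments_fps_def lin_prod_def fps_ext)
next
  case (Cons g gs)
  let ?L = "\<lambda>g. 1 - fps_const g * fps_X"
  have "(1 - moments_fps (g # gs)) * lin_prod (g # gs) =
      ((1 - moments_fps gs) * ?L g - moment_step_fps g gs * ?L g) * lin_prod gs"
    by (simp add: moments_fps_Cons lin_prod_Cons algebra_simps)
  also have "\<dots> = ((1 - moments_fps gs) * ?L g - fps_X * (1 - moments_fps gs)) * lin_prod gs"
    by (simp only: moment_step_fps_mult)
  also have "\<dots> = ?L (g + 1) * ((1 - moments_fps gs) * lin_prod gs)"
    by (simp add: algebra_simps flip: fps_const_add)
  also have "\<dots> = lin_prod (map (\<lambda>g. g + 1) (g # gs))"
    by (simp add: Cons.IH lin_prod_Cons)
  finally show ?case .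
qed

lemma lin_log_deriv_mult: "(1 - fps_const g * fps_X) * lin_log_deriv g = - fps_const g"
proof -
  have "lin_log_deriv g - fps_const g * (fps_X * lin_log_deriv g) = - fps_const g"
  proof (rule fps_ext)
    fix k
    show "fps_nth (lin_log_deriv g - fps_const g * (fps_X * lin_log_deriv g)) k = fps_nth (- fps_const g) k"
      by (cases k) (auto simp: lin_log_deriv_def)
  qed
  then show ?thesis
    by (simp add: algebra_simps)
qed

lemma fps_deriv_lin_prod: "fps_deriv (lin_prod gs) = lin_prod gs * lin_prod_log_deriv gs"
proof (induction gs)
  case Nil
  then show ?case
    by (simp add: lin_prod_def lin_prod_log_deriv_def)
next
  case (Cons g gs)
  let ?L = "1 - fps_const g * fps_X"
  have "fps_deriv (lin_prod (g # gs)) = - fps_const g * lin_prod gs + ?L * (lin_prod gs * lin_prod_log_deriv gs)"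
    by (simp add: lin_prod_Cons Cons.IH)
  also have "\<dots> = (?L * lin_log_deriv g) * lin_prod gs + ?L * (lin_prod gs * lin_prod_log_deriv gs)"
    by (simp only: lin_log_deriv_mult)
  also have "\<dots> = lin_prod (g # gs) * lin_prod_log_deriv (g # gs)"
    by (simp add: lin_prod_Cons lin_prod_log_deriv_def algebra_simps)
  finally show ?case .
qed

lemma lin_prod_nonzero: "lin_prod gs \<noteq> 0"
proof -
  have "fps_nth (lin_prod gs) 0 = 1"
    by (induction gs) (auto simp: lin_prod_def)
  then show ?thesis
    by auto
qed

lemma fps_nth_lin_prod_log_deriv_diff:
  "fps_nth (lin_prod_log_deriv gs - lin_prod_log_deriv (map (\<lambda>g. g + 1) gs)) k
     = sum_list (map (fwd_diff_pow (k + 1)) gs)"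
  by (induction gs) (auto simp: lin_prod_log_deriv_def lin_log_deriv_def fwd_diff_pow_def)

lemma fps_deriv_moments_fps:
  fixes gs :: "'a::idom list"
  shows "fps_deriv (moments_fps gs) =
           (1 - moments_fps gs) * (lin_prod_log_deriv gs - lin_prod_log_deriv (map (\<lambda>g. g + 1) gs))"
proof -
  let ?F = "moments_fps gs" and ?Q = "lin_prod gs" and ?gs' = "map (\<lambda>g. g + 1) gs"
  have "fps_deriv ((1 - ?F) * ?Q) = fps_deriv (lin_prod ?gs')"
    by (simp only: one_minus_moments_fps_mult_lin_prod)
  then have "- fps_deriv ?F * ?Q + (1 - ?F) * (?Q * lin_prod_log_deriv gs) =
      lin_prod ?gs' * lin_prod_log_deriv ?gs'"
    by (simp add: fps_deriv_lin_prod)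
  then have "- fps_deriv ?F * ?Q + (1 - ?F) * (?Q * lin_prod_log_deriv gs) =
      (1 - ?F) * ?Q * lin_prod_log_deriv ?gs'"
    by (simp only: one_minus_moments_fps_mult_lin_prod)
  then have "?Q * (fps_deriv ?F - (1 - ?F) * (lin_prod_log_deriv gs - lin_prod_log_deriv ?gs')) = 0"
    by (simp add: algebra_simps)
  then show ?thesis
    using lin_prod_nonzero[of gs] by simp
qed

lemma moments_newton:
  fixes gs :: "'a::idom list"
  shows "of_nat (p + 1) * moments gs p = sum_list (map (fwd_diff_pow (p + 1)) gs)
    - (\<Sum>i=0..p. fps_nth (moments_fps gs) i * sum_list (map (fwd_diff_pow (p - i + 1)) gs))"
proof -
  let ?D = "lin_prod_log_deriv gs - lin_prod_log_deriv (map (\<lambda>g. g + 1) gs)"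
  have "fps_nth (fps_deriv (moments_fps gs)) p = fps_nth ((1 - moments_fps gs) * ?D) p"
    by (simp only: fps_deriv_moments_fps)
  also have "\<dots> = fps_nth ?D p - fps_nth (moments_fps gs * ?D) p"
    by (simp add: algebra_simps)
  also have "\<dots> = sum_list (map (fwd_diff_pow (p + 1)) gs)
      - (\<Sum>i=0..p. fps_nth (moments_fps gs) i * sum_list (map (fwd_diff_pow (p - i + 1)) gs))"
    by (simp only: fps_mult_nth fps_nth_lin_prod_log_deriv_diff)
  finally show ?thesis
    by (simp add: moments_fps_def)
qed

lemma fwd_diff_pow_sums_eq_if_moments_eq:
  fixes gs hs :: "'a::{idom, ring_char_0} list"
  assumes "\<forall>q\<le>N. moments gs q = moments hs q" and "p \<le> N"
  shows "sum_list (map (fwd_diff_pow (p + 1)) gs) = sum_list (map (fwd_diff_pow (p + 1)) hs)"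
  using assms(2)
proof (induction p rule: less_induct)
  case (less p)
  have "fps_nth (moments_fps gs) i * sum_list (map (fwd_diff_pow (p - i + 1)) gs)
      = fps_nth (moments_fps hs) i * sum_list (map (fwd_diff_pow (p - i + 1)) hs)"
    if "i \<in> {0..p}" for i
  proof (cases i)
    case (Suc i')
    then have "sum_list (map (fwd_diff_pow (p - i + 1)) gs) = sum_list (map (fwd_diff_pow (p - i + 1)) hs)"
      using less.prems that Suc by (intro less.IH) auto
    moreover have "moments gs i' = moments hs i'"
      using assms(1) Suc that less by auto
    ultimately show ?thesis
      using Suc by (simp add: moments_fps_nth)
  qed (simp add: moments_fps_nth)
  then have "(\<Sum>i=0..p. fps_nth (moments_fps gs) i * sum_list (map (fwd_diff_pow (p - i + 1)) gs))
      = (\<Sum>i=0..p. fps_nth (moments_fps hs) i * sum_list (map (fwd_diff_pow (p - i + 1)) hs))"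
    by (rule sum.cong[OF refl])
  moreover have "moments gs p = moments hs p"
    using assms(1) less by auto
  ultimately show ?case
    using moments_newton[of p gs] moments_newton[of p hs] by (simp add: eq_diff_eq)
qed

section \<open>From finite differences to power sums\<close>

definition fwd_diff2_pow :: "nat \<Rightarrow> 'a::comm_ring_1 \<Rightarrow> 'a" where
  "fwd_diff2_pow j x = fwd_diff_pow j (x + 1) - fwd_diff_pow j x"

lemma fwd_diff_pow_binomial: "fwd_diff_pow j x = (\<Sum>l<j. of_nat (j choose l) * x ^ l)"
proof -
  have "(x + 1) ^ j = (\<Sum>l\<le>j. of_nat (j choose l) * x ^ l * 1 ^ (j - l))"
    by (rule binomial_ring)
  also have "\<dots> = (\<Sum>l<j. of_nat (j choose l) * x ^ l) + x ^ j"
    by (simp add: lessThan_Suc_atMost[symmetric])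
  finally show ?thesis
    by (simp add: fwd_diff_pow_def)
qed

lemma fwd_diff2_pow_binomial: "fwd_diff2_pow j x = (\<Sum>l<j. of_nat (j choose l) * fwd_diff_pow l x)"
proof -
  have "fwd_diff2_pow j x = (\<Sum>l<j. of_nat (j choose l) * (x + 1) ^ l) - (\<Sum>l<j. of_nat (j choose l) * x ^ l)"
    by (simp only: fwd_diff2_pow_def fwd_diff_pow_binomial)
  also have "\<dots> = (\<Sum>l<j. of_nat (j choose l) * fwd_diff_pow l x)"
    by (simp add: fwd_diff_pow_def sum_subtractf[symmetric] right_diff_distrib)
  finally show ?thesis .
qed

lemma eq_if_binomial_transforms_eq:
  fixes f g :: "nat \<Rightarrow> 'a::{idom, ring_char_0}"
  assumes "\<forall>j\<le>N+1. (\<Sum>l<j. of_nat (j choose l) * f l) = (\<Sum>l<j. of_nat (j choose l) * g l)"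
    and "i \<le> N"
  shows "f i = g i"
  using assms(2)
proof (induction i rule: less_induct)
  case (less i)
  have "(\<Sum>l<Suc i. of_nat (Suc i choose l) * f l) = (\<Sum>l<Suc i. of_nat (Suc i choose l) * g l)"
    using assms(1) less.prems by auto
  moreover have "(\<Sum>l<i. of_nat (Suc i choose l) * f l) = (\<Sum>l<i. of_nat (Suc i choose l) * g l)"
    using less by (intro sum.cong) auto
  ultimately have "of_nat (Suc i) * f i = of_nat (Suc i) * g i"
    by simp
  then show ?case
    by (simp only: mult_cancel_left of_nat_eq_0_iff) simp
qed

lemma power_sums_eq_if_fwd_diff2_sums_eq:
  fixes x :: "nat \<Rightarrow> 'a::{idom, ring_char_0}"
  assumes "\<forall>j\<le>s+2. (\<Sum>a\<in>I. fwd_diff2_pow j (x a)) = (\<Sum>a\<in>J. fwd_diff2_pow j (x a))"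
    and "i \<le> s"
  shows "(\<Sum>a\<in>I. x a ^ i) = (\<Sum>a\<in>J. x a ^ i)"
proof -
  have swap: "(\<Sum>a\<in>A. \<Sum>l<j. of_nat (j choose l) * h l a) = (\<Sum>l<j. of_nat (j choose l) * (\<Sum>a\<in>A. h l a))"
    for A j and h :: "nat \<Rightarrow> nat \<Rightarrow> 'a"
    by (simp add: sum_distrib_left sum.swap[of _ A])
  have "(\<Sum>a\<in>I. fwd_diff_pow l (x a)) = (\<Sum>a\<in>J. fwd_diff_pow l (x a))" if "l \<le> s + 1" for l
    by (rule eq_if_binomial_transforms_eq[OF _ that])
      (use assms(1) in \<open>simp add: fwd_diff2_pow_binomial swap\<close>)
  then show ?thesis
    by (intro eq_if_binomial_transforms_eq[OF _ assms(2)]) (simp add: fwd_diff_pow_binomial swap[symmetric])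
qed

lemma power_sums_add_const_eq:
  fixes x :: "nat \<Rightarrow> 'a::comm_ring_1"
  assumes "\<forall>l\<le>i. (\<Sum>a\<in>I. x a ^ l) = (\<Sum>a\<in>J. x a ^ l)"
  shows "(\<Sum>a\<in>I. (x a + c) ^ i) = (\<Sum>a\<in>J. (x a + c) ^ i)"
proof -
  have "(\<Sum>a\<in>A. (x a + c) ^ i) = (\<Sum>l\<le>i. of_nat (i choose l) * (\<Sum>a\<in>A. x a ^ l) * c ^ (i - l))" for A
    by (simp add: binomial_ring sum_distrib_left sum_distrib_right sum.swap[of _ A] mult.assoc)
  then show ?thesis
    using assms by simp
qed

lemma sum_list_map_upt_eq_sum: "sum_list (map f [1..<n+1]) = (\<Sum>a=1..n. f a)"
  by (metis atLeastLessThanSuc_atLeastAtMost Suc_eq_plus1 set_upt sum_set_upt_conv_sum_list_nat)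

lemma fwd_diff_pow_sum_add_indicator:
  assumes "X \<subseteq> {1..n}"
  shows "sum_list (map (fwd_diff_pow j) (map (\<lambda>a. x a + of_bool (a \<in> X)) [1..<n+1])) =
           (\<Sum>a=1..n. fwd_diff_pow j (x a)) + (\<Sum>a\<in>X. fwd_diff2_pow j (x a))"
proof -
  have "sum_list (map (fwd_diff_pow j) (map (\<lambda>a. x a + of_bool (a \<in> X)) [1..<n+1])) =
      (\<Sum>a=1..n. fwd_diff_pow j (x a) + (if a \<in> X then fwd_diff2_pow j (x a) else 0))"
    unfolding map_map sum_list_map_upt_eq_sum by (rule sum.cong) (simp_all add: fwd_diff2_pow_def)
  also have "\<dots> = (\<Sum>a=1..n. fwd_diff_pow j (x a)) + (\<Sum>a\<in>{1..n} \<inter> X. fwd_diff2_pow j (x a))"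
    by (simp add: sum.distrib sum.inter_restrict)
  finally show ?thesis
    using assms by (simp add: Int_absorb1)
qed

lemma power_sums_eq_if_moments_eq:
  fixes x :: "nat \<Rightarrow> 'a::{idom, ring_char_0}"
  assumes "I \<subseteq> {1..n}" "J \<subseteq> {1..n}"
    and "\<forall>q\<le>s+1. moments (map (\<lambda>a. x a + of_bool (a \<in> I)) [1..<n+1]) q =
                  moments (map (\<lambda>a. x a + of_bool (a \<in> J)) [1..<n+1]) q"
    and "i \<le> s"
  shows "(\<Sum>a\<in>I. (x a + c) ^ i) = (\<Sum>a\<in>J. (x a + c) ^ i)"
proof -
  have "(\<Sum>a\<in>I. fwd_diff2_pow j (x a)) = (\<Sum>a\<in>J. fwd_diff2_pow j (x a))" if "j \<le> s + 2" for j
  proof (cases j)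
    case (Suc p)
    have "sum_list (map (fwd_diff_pow (p + 1)) (map (\<lambda>a. x a + of_bool (a \<in> I)) [1..<n+1])) =
        sum_list (map (fwd_diff_pow (p + 1)) (map (\<lambda>a. x a + of_bool (a \<in> J)) [1..<n+1]))"
      using that Suc by (intro fwd_diff_pow_sums_eq_if_moments_eq[OF assms(3)]) simp
    then show ?thesis
      unfolding fwd_diff_pow_sum_add_indicator[OF assms(1)] fwd_diff_pow_sum_add_indicator[OF assms(2)] Suc
      by simp
  qed (simp add: fwd_diff2_pow_def fwd_diff_pow_def)
  then show ?thesis
    using assms(4) by (intro power_sums_add_const_eq allI impI power_sums_eq_if_fwd_diff2_sums_eq) auto
qed

section \<open>The weights \<open>\<nu> + \<lambda>\<^sub>I\<close>\<close>

lemma hval_eq_sum: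
  assumes "1 \<le> a"
  shows "hval n mu a = of_int (\<Sum>t\<in>{a..<n}. mu t) - (\<Sum>t\<in>{1..<n}. of_int (mu t) * of_nat t) / of_nat n"
proof -
  have "{1..n-1} = {1..<n}"
    by auto
  then have "hval n mu a = (\<Sum>t\<in>{1..<n}. if a \<le> t then of_int (mu t) else 0)
      - (\<Sum>t\<in>{1..<n}. of_int (mu t) * of_nat t / of_nat n)"
    unfolding hval_def sum_subtractf[symmetric] by (intro sum.cong) (auto simp: algebra_simps)
  also have "(\<Sum>t\<in>{1..<n}. if a \<le> t then of_int (mu t) else 0) = (\<Sum>t\<in>{1..<n} \<inter> {t. a \<le> t}. (of_int (mu t) :: complex))"
    by (simp add: sum.inter_restrict)
  also have "{1..<n} \<inter> {t. a \<le> t} = {a..<n}"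
    using assms by auto
  finally show ?thesis
    by (simp add: sum_divide_distrib)
qed

lemma hval_wt_add: "hval n (wt_add mu mu') a = hval n mu a + hval n mu' a"
  by (simp add: hval_def wt_add_def distrib_right sum.distrib)

lemma sum_index_mult_diff:
  fixes f :: "nat \<Rightarrow> 'a::comm_ring_1"
  shows "(\<Sum>t=1..<n. of_nat t * (f t - f (Suc t))) = (\<Sum>t=1..n. f t) - of_nat n * f n"
proof (induction n)
  case (Suc n)
  then show ?case
    by (cases n) (simp_all add: algebra_simps)
qed simp

lemma hval_lamI:
  assumes I: "I \<subseteq> {1..n}" and a: "a \<in> {1..n}"
  shows "hval n (lamI I) a = of_bool (a \<in> I) - of_nat (card I) / of_nat n"
proof -
  define ind :: "nat \<Rightarrow> int" where "ind t = of_bool (t \<in> I)" for t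
  have lam: "lamI I t = ind t - ind (Suc t)" for t
    by (simp add: lamI_def ind_def)
  have "(\<Sum>t\<in>{a..<n}. lamI I t) = ind a - ind n"
    using sum_Suc_diff'[of a n "\<lambda>t. - ind t"] a by (simp add: lam)
  moreover have "(\<Sum>t=1..<n. int t * lamI I t) = int (card I) - int n * ind n"
  proof -
    have "(\<Sum>t=1..n. ind t) = int (card I)"
      using I by (simp add: ind_def Int_absorb1)
    then show ?thesis
      using sum_index_mult_diff[of ind n] by (simp add: lam)
  qed
  moreover have "(\<Sum>t\<in>{1..<n}. of_int (lamI I t) * of_nat t) = (of_int (\<Sum>t=1..<n. int t * lamI I t) :: complex)"
    by (simp add: mult.commute)
  moreover have "(of_nat n :: complex) \<noteq> 0"
    using a by simp
  ultimately have "hval n (lamI I) a = of_int (ind a) - of_int (ind n) - (of_nat (card I) - of_nat n * of_int (ind n)) / of_nat n"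
    using a by (simp add: hval_eq_sum)
  also have "\<dots> = of_int (ind a) - of_nat (card I) / of_nat n"
    using a by (simp add: diff_divide_distrib)
  finally show ?thesis
    by (simp add: ind_def)
qed

text \<open>The \<open>\<epsilon>\<^sub>a\<close>-coordinate of \<open>\<mu> + \<rho>\<close>, normalised so that the \<open>n\<close>-th one vanishes.\<close>

definition rho_coord :: "nat \<Rightarrow> (nat \<Rightarrow> int) \<Rightarrow> nat \<Rightarrow> int" where
  "rho_coord n mu a = (\<Sum>t\<in>{a..<n}. mu t) + int (n - a)"

lemma rho_hval_eq_rho_coord:
  "1 \<le> a \<Longrightarrow> rho_hval n mu a = of_int (rho_coord n mu a) - (\<Sum>t\<in>{1..<n}. of_int (mu t) * of_nat t) / of_nat n"
  by (simp add: rho_hval_def rho_coord_def hval_eq_sum)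

lemma rho_hval_wt_add_lamI:
  "I \<subseteq> {1..n} \<Longrightarrow> a \<in> {1..n} \<Longrightarrow>
     rho_hval n (wt_add mu (lamI I)) a = rho_hval n mu a + of_bool (a \<in> I) - of_nat (card I) / of_nat n"
  by (simp add: rho_hval_def hval_wt_add hval_lamI)

lemma rho_coord_strict_decreasing:
  assumes "dominant n mu" and "a < b" and "a \<in> {1..n}" and "b \<in> {1..n}"
  shows "rho_coord n mu b < rho_coord n mu a"
proof -
  have "(\<Sum>t\<in>{a..<n}. mu t) = (\<Sum>t\<in>{a..<b}. mu t) + (\<Sum>t\<in>{b..<n}. mu t)"
    using assms by (simp add: sum.atLeastLessThan_concat)
  moreover have "0 \<le> (\<Sum>t\<in>{a..<b}. mu t)"
    using assms by (intro sum_nonneg) (auto simp: dominant_def)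
  ultimately show ?thesis
    using assms unfolding rho_coord_def by simp
qed

lemma inj_on_rho_coord:
  assumes "dominant n mu"
  shows "inj_on (rho_coord n mu) {1..n}"
proof (rule inj_onI)
  fix a b
  assume "a \<in> {1..n}" "b \<in> {1..n}" "rho_coord n mu a = rho_coord n mu b"
  then show "a = b"
    using rho_coord_strict_decreasing[OF assms, of a b] rho_coord_strict_decreasing[OF assms, of b a]
    by (cases a b rule: linorder_cases) auto
qed

section \<open>Equal Casimir eigenvalues give a PTE solution\<close>

lemma rho_coord_power_sums_eq_if_chi_eq:
  assumes I: "I \<subseteq> {1..n}" and J: "J \<subseteq> {1..n}" and card: "card J = card I"
    and chi: "\<forall>p. 2 \<le> p \<and> p \<le> s + 1 \<longrightarrow> chi n (wt_add nu (lamI I)) p = chi n (wt_add nu (lamI J)) p"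
    and "i \<le> s"
  shows "(\<Sum>a\<in>I. rho_coord n nu a ^ i) = (\<Sum>a\<in>J. rho_coord n nu a ^ i)"
proof -
  define c :: complex
    where "c = ((\<Sum>t\<in>{1..<n}. of_int (nu t) * of_nat t) + of_nat (card I)) / of_nat n"
  define x where "x a = of_int (rho_coord n nu a) - c" for a
  define gs where "gs X = map (\<lambda>a. x a + of_bool (a \<in> X)) [1..<n+1]" for X
  have rho_hval_gs: "map (rho_hval n (wt_add nu (lamI X))) [1..<n+1] = gs X"
    if "X \<subseteq> {1..n}" "card X = card I" for X
    unfolding gs_def
  proof (rule map_cong)
    fix a assume "a \<in> set [1..<n+1]"
    then have a: "a \<in> {1..n}"
      by auto
    then show "rho_hval n (wt_add nu (lamI X)) a = x a + of_bool (a \<in> X)"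
      unfolding rho_hval_wt_add_lamI[OF that(1) a]
      using a by (simp add: rho_hval_eq_rho_coord x_def c_def that(2) add_divide_distrib)
  qed simp
  have "moments (gs I) q = moments (gs J) q" if "q \<le> s + 1" for q
  proof -
    consider "q = 0" | "q = 1" | "2 \<le> q"
      by linarith
    then show ?thesis
    proof cases
      case 1
      then show ?thesis
        by (simp add: moments_0 gs_def)
    next
      case 2
      have "moments (gs X) 1 = (\<Sum>a=1..n. x a) + of_nat (card I) - of_nat (n choose 2)"
        if "X \<subseteq> {1..n}" "card X = card I" for X
        using that unfolding moments_1 gs_def sum_list_map_upt_eq_sum
        by (simp add: sum.distrib Int_absorb1 del: upt_Suc)
      then show ?thesis
        using 2 I J card by simp
    next
      case 3
      then obtain p where p: "q = Suc p"
        using not0_implies_Suc by force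
      then have "chi n (wt_add nu (lamI I)) (Suc p) = chi n (wt_add nu (lamI J)) (Suc p)"
        using chi 3 that by simp
      then show ?thesis
        unfolding p chi_eq_moments rho_hval_gs[OF I refl] rho_hval_gs[OF J card] .
    qed
  qed
  then have "(\<Sum>a\<in>I. (x a + c) ^ i) = (\<Sum>a\<in>J. (x a + c) ^ i)"
    using I J \<open>i \<le> s\<close> unfolding gs_def by (intro power_sums_eq_if_moments_eq) auto
  then have "of_int (\<Sum>a\<in>I. rho_coord n nu a ^ i) = (of_int (\<Sum>a\<in>J. rho_coord n nu a ^ i) :: complex)"
    by (simp add: x_def)
  then show ?thesis
    by (simp only: of_int_eq_iff)
qed

lemma exists_pte_if_power_sums_eq:
  fixes y :: "nat \<Rightarrow> int"
  assumes "finite I" "finite J" "I \<noteq> J" "card I = card J" "inj_on y (I \<union> J)"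
    and "\<forall>j\<in>{1..s}. (\<Sum>a\<in>I. y a ^ j) = (\<Sum>a\<in>J. y a ^ j)"
  shows "\<exists>xs ys :: int list.
           length xs = card I - card (I \<inter> J) \<and> length ys = card I - card (I \<inter> J) \<and>
           mset xs \<noteq> mset ys \<and> (\<forall>j\<in>{1..s}. (\<Sum>x\<leftarrow>xs. x ^ j) = (\<Sum>y\<leftarrow>ys. y ^ j))"
proof (intro exI conjI)
  let ?xs = "map y (sorted_list_of_set (I - J))" and ?ys = "map y (sorted_list_of_set (J - I))"
  show "length ?xs = card I - card (I \<inter> J)" "length ?ys = card I - card (I \<inter> J)"
    using assms(1-4) by (simp_all add: card_Diff_subset_Int Int_commute)
  have list_power_sum: "(\<Sum>x\<leftarrow>map y (sorted_list_of_set A). x ^ j) = (\<Sum>a\<in>A. y a ^ j)" if "finite A" for A j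
    using that by (simp add: sum.distinct_set_conv_list[symmetric] comp_def)
  show "\<forall>j\<in>{1..s}. (\<Sum>x\<leftarrow>?xs. x ^ j) = (\<Sum>x\<leftarrow>?ys. x ^ j)"
  proof
    fix j assume "j \<in> {1..s}"
    then have "(\<Sum>a\<in>I \<inter> J. y a ^ j) + (\<Sum>a\<in>I - J. y a ^ j) = (\<Sum>a\<in>J \<inter> I. y a ^ j) + (\<Sum>a\<in>J - I. y a ^ j)"
      using assms(1,2,6) by (simp add: sum.Int_Diff[symmetric])
    then show "(\<Sum>x\<leftarrow>?xs. x ^ j) = (\<Sum>x\<leftarrow>?ys. x ^ j)"
      using assms(1,2) by (simp only: list_power_sum finite_Diff Int_commute add_left_cancel)
  qed
  obtain a where a: "a \<in> I - J"
    using assms(1-4) card_subset_eq by blast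
  have "y a \<notin> y ` (J - I)"
    using a assms(5) by (auto simp: inj_on_def)
  then have "y a \<in> set ?xs - set ?ys"
    using a assms(1,2) by simp
  then show "mset ?xs \<noteq> mset ?ys"
    by (metis Diff_iff set_mset_mset)
qed

theorem proposition6p1:
  fixes n k s :: nat and I J :: "nat set" and nu :: "nat \<Rightarrow> int"
  assumes "1 \<le> k" and "k \<le> n - k"
    and "I \<subseteq> {1..n}" and "J \<subseteq> {1..n}" and "card I = k" and "card J = k"
    and "I \<noteq> J" and "Min I \<le> Min J"
    and "dominant n nu" and "dominant n (wt_add nu (lamI I))"
    and "dominant n (wt_add nu (lamI J))"
    and "1 \<le> s"
    and "\<forall>p. 2 \<le> p \<and> p \<le> s + 1 \<longrightarrow> fC n k p I nu = fC n k p J nu"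
  shows "\<exists>xs ys :: int list.
           length xs = k - card (I \<inter> J) \<and> length ys = k - card (I \<inter> J) \<and>
           mset xs \<noteq> mset ys \<and>
           (\<forall>j\<in>{1..s}. (\<Sum>x\<leftarrow>xs. x ^ j) = (\<Sum>y\<leftarrow>ys. y ^ j))"
proof -
  have finite: "finite I" "finite J"
    using assms(3,4) finite_subset by blast+
  have "\<forall>p. 2 \<le> p \<and> p \<le> s + 1 \<longrightarrow> chi n (wt_add nu (lamI I)) p = chi n (wt_add nu (lamI J)) p"
    using assms(13) by (simp add: fC_def)
  then have "\<forall>j\<in>{1..s}. (\<Sum>a\<in>I. rho_coord n nu a ^ j) = (\<Sum>a\<in>J. rho_coord n nu a ^ j)"
    using rho_coord_power_sums_eq_if_chi_eq[OF assms(3,4)] assms(5,6) by simp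
  moreover have "inj_on (rho_coord n nu) (I \<union> J)"
    by (rule inj_on_subset[OF inj_on_rho_coord[OF assms(9)]]) (use assms(3,4) in auto)
  ultimately show ?thesis
    using exists_pte_if_power_sums_eq[OF finite assms(7)] assms(5,6) by simp
qed

end
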